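(* Let $k$ be a field containing all $m$-th roots of unity, with $p\nmid m$ if $\operatorname{char}(k)=p>0$. Let $\mathcal A$ be a perfect $k$-algebra, $S$ a commutative associative unital $k$-algebra, $\sigma_1\in\operatorname{Aut}(\mathcal A)$, $\sigma_2\in\operatorname{Aut}(S)$ with $\sigma_1^m=\mathrm{id}$, $\sigma_2^m=\mathrm{id}$, and suppose $S_{\bar 1}$ contains an invertible element $u$ of $S$. Let $d\in\mathcal D((\mathcal A\otimes S)_{\bar 0})$, $i,j,s,t\in\mathbb Z$, $a_{\bar i}\in\mathcal A_{\bar i}$, $a_{\bar j}\in\mathcal A_{\bar j}$, $b_{-\bar i+\bar s}\in S_{-\bar i+\bar s}$, $b_{-\bar j+\bar t}\in S_{-\bar j+\bar t}$. Then $$\big[u^{-m+s}d(a_{\bar i}\otimes u^{-s+m}b_{-\bar i+\bar s})-u^{s}d(a_{\bar i}\otimes u^{-s}b_{-\bar i+\bar s})\big](a_{\bar j}\otimes b_{-\bar j+\bar t}) =(a_{\bar i}\otimes b_{-\bar i+\bar s})\big[u^{-m+t}d(a_{\bar j}\otimes u^{-t+m}b_{-\bar j+\bar t})-u^{t}d(a_{\bar j}\otimes u^{-t}b_{-\bar j+\bar t})\big].$$ In particular, $$(a_{\bar i}\otimes u^{-i})\big[u^{-m+j}d(a_{\bar j}\otimes u^{-j+m})-d(a_{\bar j}\otimes u^{-j})u^{j}\big]u^{-j}=\big[u^{-m+i}d(a_{\bar i}\otimes u^{-i+m})-d(a_{\bar i}\otimes u^{-i})u^{i}\big]u^{-i}(a_{\bar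 j}\otimes u^{-j}),$$ and $$(a_{\bar i}\otimes 1)\big[u^{-m+t}d(a_{\bar j}\otimes u^{-t+m}b_{-\bar j+\bar t})-d(a_{\bar j}\otimes u^{-t}b_{-\bar j+\bar t})u^{t}\big]=\big[u^{-m+i}d(a_{\bar i}\otimes u^{-i+m})-d(a_{\bar i}\otimes u^{-i})u^{i}\big](a_{\bar j}\otimes b_{-\bar j+\bar t}).$$
   Context: Algebras are $k$-vector spaces with bilinear product (not necessarily associative); perfect means $\mathcal A\mathcal A=\mathcal A$; $\mathcal D$ denotes derivations. Fix a primitive $m$-th root of unity $\omega$; $\mathcal A_{\bar i}=\{a\mid\sigma_1(a)=\omega^ia\}$, $S_{\bar i}=\{s\mid\sigma_2(s)=\omega^is\}$, and $(\mathcal A\otimes S)_{\bar 0}=\sum_{\bar j}\mathcal A_{-\bar j}\otimes S_{\bar j}$ is the fixed-point subalgebra of $\sigma_1\otimes\sigma_2$ (product $(a\otimes s)(a'\otimes s')=aa'\otimes ss'$). $\mathcal A\otimes S$ is an $S$-bimodule via $s'(a\otimes s)=(a\otimes s)s'=a\otimes ss'$, and products of elements of $S$ with elements of $\mathcal A\otimes S$ denote this action. *)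

theory Defs
  imports Complex_Main
begin

definition bilin ::
  "('k::field \<Rightarrow> 'a::ab_group_add \<Rightarrow> 'a) \<Rightarrow> ('k \<Rightarrow> 'b::ab_group_add \<Rightarrow> 'b) \<Rightarrow>
   ('k \<Rightarrow> 'c::ab_group_add \<Rightarrow> 'c) \<Rightarrow> ('a \<Rightarrow> 'b \<Rightarrow> 'c) \<Rightarrow> bool" where
  "bilin s1 s2 s3 f \<longleftrightarrow>
     (\<forall>x. Vector_Spaces.linear s2 s3 (f x)) \<and> (\<forall>y. Vector_Spaces.linear s1 s3 (\<lambda>x. f x y))"

text \<open>Over a field this characterises the
  tensor product up to unique isomorphism.\<close>
definition is_tensor_product ::
  "('k::field \<Rightarrow> 'a::ab_group_add \<Rightarrow> 'a) \<Rightarrow> ('k \<Rightarrow> 's::ab_group_add \<Rightarrow> 's) \<Rightarrow>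
   ('k \<Rightarrow> 't::ab_group_add \<Rightarrow> 't) \<Rightarrow> ('a \<Rightarrow> 's \<Rightarrow> 't) \<Rightarrow> bool" where
  "is_tensor_product sA sS sT tp \<longleftrightarrow>
     vector_space sA \<and> vector_space sS \<and> vector_space sT \<and>
     bilin sA sS sT tp \<and>
     module.span sT (range (case_prod tp)) = UNIV \<and>
     (\<forall>B C. \<not> module.dependent sA B \<longrightarrow> \<not> module.dependent sS C \<longrightarrow>
        inj_on (case_prod tp) (B \<times> C) \<and> \<not> module.dependent sT (case_prod tp ` (B \<times> C)))"

definition k_algebra ::
  "('k::field \<Rightarrow> 'a::ab_group_add \<Rightarrow> 'a) \<Rightarrow> ('a \<Rightarrow> 'a \<Rightarrow> 'a) \<Rightarrow> bool" where
  "k_algebra sA mA \<longleftrightarrow> vector_space sA \<and> bilin sA sA sA mA"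

definition perfect ::
  "('k::field \<Rightarrow> 'a::ab_group_add \<Rightarrow> 'a) \<Rightarrow> ('a \<Rightarrow> 'a \<Rightarrow> 'a) \<Rightarrow> bool" where
  "perfect sA mA \<longleftrightarrow> module.span sA {mA x y | x y. True} = UNIV"

definition comm_k_algebra :: "('k::field \<Rightarrow> 's::comm_ring_1 \<Rightarrow> 's) \<Rightarrow> bool" where
  "comm_k_algebra sS \<longleftrightarrow> vector_space sS \<and> (\<forall>c x y. sS c (x * y) = sS c x * y)"

definition alg_aut ::
  "('k::field \<Rightarrow> 'a::ab_group_add \<Rightarrow> 'a) \<Rightarrow> ('a \<Rightarrow> 'a \<Rightarrow> 'a) \<Rightarrow> ('a \<Rightarrow> 'a) \<Rightarrow> bool" where
  "alg_aut sA mA f \<longleftrightarrow> bij f \<and> Vector_Spaces.linear sA sA f \<and> (\<forall>x y. f (mA x y) = mA (f x) (f y))"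

text \<open>Eigenspace \<open>X_{\bar i} = {x | \<sigma> x = \<omega>^i x}\<close>, i an integer.\<close>
definition grade :: "('k::field \<Rightarrow> 'a \<Rightarrow> 'a) \<Rightarrow> ('a \<Rightarrow> 'a) \<Rightarrow> 'k \<Rightarrow> int \<Rightarrow> 'a set" where
  "grade sc \<sigma> \<omega> i = {x. \<sigma> x = sc (\<omega> powi i) x}"

text \<open>Integer powers of a unit u of a commutative ring, v being its inverse.\<close>
definition zpow :: "'s::comm_ring_1 \<Rightarrow> 's \<Rightarrow> int \<Rightarrow> 's" where
  "zpow u v n = (if 0 \<le> n then u ^ nat n else v ^ nat (- n))"

text \<open>\<open>(A \<otimes> S)_{\bar 0} = \<Sum>_j A_{-\bar j} \<otimes> S_{\bar j}\<close>.\<close>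
definition fixed_sub ::
  "('k::field \<Rightarrow> 't::ab_group_add \<Rightarrow> 't) \<Rightarrow> ('a \<Rightarrow> 's \<Rightarrow> 't) \<Rightarrow> (int \<Rightarrow> 'a set) \<Rightarrow> (int \<Rightarrow> 's set) \<Rightarrow> 't set" where
  "fixed_sub sT tp gA gS = module.span sT {tp a s | a s j. a \<in> gA (- j) \<and> s \<in> gS j}"

definition derivation_on ::
  "('k::field \<Rightarrow> 't::ab_group_add \<Rightarrow> 't) \<Rightarrow> ('t \<Rightarrow> 't \<Rightarrow> 't) \<Rightarrow> 't set \<Rightarrow> ('t \<Rightarrow> 't) \<Rightarrow> bool" where
  "derivation_on sT mT B d \<longleftrightarrow>
     (\<forall>x\<in>B. d x \<in> B) \<and>
     (\<forall>x\<in>B. \<forall>y\<in>B. d (x + y) = d x + d y) \<and>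
     (\<forall>c. \<forall>x\<in>B. d (sT c x) = sT c (d x)) \<and>
     (\<forall>x\<in>B. \<forall>y\<in>B. d (mT x y) = mT (d x) y + mT x (d y))"

end

(*
  Put w = u^m, which lies in S of degree 0 since \<omega>^m = 1, and D x = d (w x) - w d x.
  Because (w x) y = x (w y), the Leibniz rule yields D x * y = x * D y whenever x, y, w x, w y
  lie in the fixed-point subalgebra. Write a_i \<otimes> b = u^s x with x = a_i \<otimes> u^-s b of degree 0,
  and likewise a_j \<otimes> b' = u^t y. As u^(-m+s) d (w x) - u^s d x = u^(-m+s) D x, both sides
  of the first identity equal u^(s+t-m) (D x * y); the other two are its cases b = 1, s = i
  (and b' = 1, t = j, multiplied by u^-i u^-j). That S acts compatibly with the product
  is checked on pure tensors, which span A \<otimes> S.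
*)

theory Submission
  imports Defs
begin

lemma alg_aut_one:
  fixes \<sigma> :: "'s::ring_1 \<Rightarrow> 's"
  assumes "alg_aut sS (*) \<sigma>"
  shows "\<sigma> 1 = 1"
proof -
  obtain y where "\<sigma> y = 1"
    using assms unfolding alg_aut_def bij_def surj_def by metis
  moreover have "\<sigma> (1 * y) = \<sigma> 1 * \<sigma> y"
    using assms unfolding alg_aut_def by blast
  ultimately show ?thesis by simp
qed

lemma zpow_0 [simp]: "zpow u v 0 = 1"
  by (simp add: zpow_def)

lemma zpow_add_one:
  assumes "u * v = 1"
  shows "zpow u v (n + 1) = u * zpow u v n"
proof -
  consider "0 \<le> n" | "n = - 1" | "n < - 1" by linarith
  then show ?thesis
  proof cases
    case 1
    then show ?thesis by (simp add: zpow_def nat_add_distrib)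
  next
    case 2
    then show ?thesis using assms by (simp add: zpow_def)
  next
    case 3
    then have "nat (- n) = Suc (nat (- (n + 1)))" by simp
    then show ?thesis
      using 3 assms by (simp add: zpow_def mult.assoc[symmetric])
  qed
qed

lemma zpow_diff_one:
  assumes "u * v = 1"
  shows "zpow u v (n - 1) = v * zpow u v n"
proof -
  have "v * zpow u v n = v * (u * zpow u v (n - 1))"
    using zpow_add_one[OF assms, of "n - 1"] by simp
  then show ?thesis
    using assms by (simp add: mult.assoc[symmetric] mult.commute[of v])
qed

lemma zpow_add:
  assumes "u * v = 1"
  shows "zpow u v a * zpow u v b = zpow u v (a + b)"
proof (induction b rule: int_induct[where k = 0])
  case base
  then show ?case by simp
next
  case (step1 b)
  then show ?case
    using zpow_add_one[OF assms] by (metis add.assoc mult.left_commute)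
next
  case (step2 b)
  then show ?case
    using zpow_diff_one[OF assms] by (metis add_diff_eq mult.left_commute)
qed

lemma grade_one:
  assumes "comm_k_algebra sS" and "alg_aut sS (*) \<sigma>"
  shows "1 \<in> grade sS \<sigma> \<omega> 0"
  using assms alg_aut_one[OF assms(2)]
  by (simp add: grade_def comm_k_algebra_def module.scale_one flip: module_iff_vector_space)

context
  fixes sS :: "'k::field \<Rightarrow> 's::comm_ring_1 \<Rightarrow> 's" and \<sigma> :: "'s \<Rightarrow> 's" and \<omega> :: 'k
  assumes S_alg: "comm_k_algebra sS" and \<sigma>_aut: "alg_aut sS (*) \<sigma>" and \<omega>_nonzero: "\<omega> \<noteq> 0"
begin

private lemma scale_scale: "sS a (sS b x) = sS (a * b) x"
  and scale_one: "sS 1 x = x"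
  and scale_mult_left: "sS c (x * y) = sS c x * y"
  using S_alg by (simp_all add: comm_k_algebra_def module.scale_scale module.scale_one
      flip: module_iff_vector_space)

lemma grade_mult:
  assumes "x \<in> grade sS \<sigma> \<omega> a" and "y \<in> grade sS \<sigma> \<omega> b"
  shows "x * y \<in> grade sS \<sigma> \<omega> (a + b)"
proof -
  have "\<sigma> (x * y) = sS (\<omega> powi a) x * sS (\<omega> powi b) y"
    using \<sigma>_aut assms by (simp add: alg_aut_def grade_def)
  also have "\<dots> = sS (\<omega> powi a) (sS (\<omega> powi b) (x * y))"
    by (metis mult.commute scale_mult_left)
  also have "\<dots> = sS (\<omega> powi (a + b)) (x * y)"
    using \<omega>_nonzero by (simp add: scale_scale power_int_add)
  finally show ?thesis by (simp add: grade_def)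
qed

lemma grade_inverse:
  assumes u: "u \<in> grade sS \<sigma> \<omega> n" and uv: "u * v = 1"
  shows "v \<in> grade sS \<sigma> \<omega> (- n)"
proof -
  have "\<sigma> u * \<sigma> v = 1"
    using \<sigma>_aut uv alg_aut_one[OF \<sigma>_aut] by (metis alg_aut_def)
  then have uv': "sS (\<omega> powi n) (u * \<sigma> v) = 1"
    using u by (simp add: grade_def scale_mult_left)
  have "sS (\<omega> powi n) (\<sigma> v) = sS (\<omega> powi n) ((v * u) * \<sigma> v)"
    using uv by (simp add: mult.commute)
  also have "\<dots> = v * sS (\<omega> powi n) (u * \<sigma> v)"
    by (metis mult.assoc mult.commute scale_mult_left)
  finally have "sS (\<omega> powi n) (\<sigma> v) = v"
    using uv' by simp
  then have "sS (\<omega> powi (- n)) v = sS (\<omega> powi (- n)) (sS (\<omega> powi n) (\<sigma> v))"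
    by simp
  also have "\<dots> = sS (\<omega> powi (- n) * \<omega> powi n) (\<sigma> v)"
    by (simp add: scale_scale)
  also have "\<dots> = \<sigma> v"
    using \<omega>_nonzero by (simp add: power_int_minus scale_one)
  finally show ?thesis by (simp add: grade_def)
qed

lemma grade_power:
  assumes "u \<in> grade sS \<sigma> \<omega> a"
  shows "u ^ n \<in> grade sS \<sigma> \<omega> (int n * a)"
proof (induction n)
  case 0
  then show ?case using grade_one[OF S_alg \<sigma>_aut] by simp
next
  case (Suc n)
  then show ?case
    using grade_mult[OF assms Suc] by (simp add: algebra_simps)
qed

lemma grade_zpow:
  assumes "u \<in> grade sS \<sigma> \<omega> 1" and "u * v = 1"
  shows "zpow u v n \<in> grade sS \<sigma> \<omega> n"
proof (cases "0 \<le> n")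
  case True
  then show ?thesis using grade_power[OF assms(1), of "nat n"] by (simp add: zpow_def)
next
  case False
  then show ?thesis using grade_power[OF grade_inverse[OF assms], of "nat (- n)"]
    by (simp add: zpow_def)
qed

end

lemma grade_add_period:
  assumes "\<omega> ^ m = (1::'k::field)"
  shows "grade sc \<sigma> \<omega> (n + int m) = grade sc \<sigma> \<omega> n"
proof (cases "\<omega> = 0")
  case True
  with assms have "m = 0" by (cases m) simp_all
  then show ?thesis by simp
next
  case False
  with assms show ?thesis by (simp add: grade_def power_int_add)
qed

locale tensor_S_bimodule =
  fixes sT :: "'k::field \<Rightarrow> 't::ab_group_add \<Rightarrow> 't" and tp :: "'a \<Rightarrow> 's::comm_ring_1 \<Rightarrow> 't"
    and mA :: "'a \<Rightarrow> 'a \<Rightarrow> 'a" and mT :: "'t \<Rightarrow> 't \<Rightarrow> 't" and act :: "'s \<Rightarrow> 't \<Rightarrow> 't"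
  assumes vector_space: "vector_space sT"
    and span_pure_tensors: "module.span sT (range (case_prod tp)) = UNIV"
    and mT_bilin: "bilin sT sT sT mT"
    and mT_tp: "mT (tp a s) (tp a' s') = tp (mA a a') (s * s')"
    and act_linear: "Vector_Spaces.linear sT sT (act c)"
    and act_tp: "act c (tp a s) = tp a (s * c)"
begin

lemma linear_eq_on_pure_tensors:
  assumes "Vector_Spaces.linear sT sT f" and "Vector_Spaces.linear sT sT g"
    and "\<And>a s. f (tp a s) = g (tp a s)"
  shows "f = g"
proof
  fix x
  have "vector_space_pair sT sT"
    using vector_space by (simp add: vector_space_pair_def)
  then show "f x = g x"
    by (rule vector_space_pair.linear_eq_on[where B = "range (case_prod tp)"])
      (use assms span_pure_tensors in auto)
qed

lemma bilin_eq_on_pure_tensors: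
  assumes f: "bilin sT sT sT f" and g: "bilin sT sT sT g"
    and eq: "\<And>a s a' s'. f (tp a s) (tp a' s') = g (tp a s) (tp a' s')"
  shows "f = g"
proof -
  have "f (tp a s) = g (tp a s)" for a s
    using f g eq by (intro linear_eq_on_pure_tensors) (auto simp: bilin_def)
  then have "(\<lambda>x. f x y) = (\<lambda>x. g x y)" for y
    using f g by (intro linear_eq_on_pure_tensors) (auto simp: bilin_def)
  then show ?thesis by (metis ext)
qed

lemma mT_linear_left: "Vector_Spaces.linear sT sT (\<lambda>x. mT x y)"
  and mT_linear_right: "Vector_Spaces.linear sT sT (mT x)"
  using mT_bilin by (simp_all add: bilin_def)

lemma bilin_act_mT: "bilin sT sT sT (\<lambda>x y. act c (mT x y))"
  using Vector_Spaces.linear_compose[OF mT_linear_left act_linear]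
    Vector_Spaces.linear_compose[OF mT_linear_right act_linear]
  by (simp add: bilin_def o_def)

lemma act_act: "act c (act c' x) = act (c * c') x"
proof -
  have "act c \<circ> act c' = act (c * c')"
    by (rule linear_eq_on_pure_tensors)
      (simp_all add: Vector_Spaces.linear_compose[OF act_linear act_linear] act_linear act_tp mult_ac)
  then show ?thesis by (metis comp_apply)
qed

lemma mT_act_left: "mT (act c x) y = act c (mT x y)"
proof -
  have "(\<lambda>x y. mT (act c x) y) = (\<lambda>x y. act c (mT x y))"
  proof (rule bilin_eq_on_pure_tensors)
    show "bilin sT sT sT (\<lambda>x y. mT (act c x) y)"
      using Vector_Spaces.linear_compose[OF act_linear mT_linear_left]
      by (simp add: bilin_def mT_linear_right o_def)
    show "bilin sT sT sT (\<lambda>x y. act c (mT x y))"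
      by (rule bilin_act_mT)
  qed (simp add: act_tp mT_tp mult_ac)
  then show ?thesis by metis
qed

lemma mT_act_right: "mT x (act c y) = act c (mT x y)"
proof -
  have "(\<lambda>x y. mT x (act c y)) = (\<lambda>x y. act c (mT x y))"
  proof (rule bilin_eq_on_pure_tensors)
    show "bilin sT sT sT (\<lambda>x y. mT x (act c y))"
      using Vector_Spaces.linear_compose[OF act_linear mT_linear_right]
      by (simp add: bilin_def mT_linear_left o_def)
    show "bilin sT sT sT (\<lambda>x y. act c (mT x y))"
      by (rule bilin_act_mT)
  qed (simp add: act_tp mT_tp mult_ac)
  then show ?thesis by metis
qed

lemma mT_act_act: "mT (act c x) (act c' y) = act (c * c') (mT x y)"
  by (simp add: mT_act_left mT_act_right act_act mult.commute)

lemma act_diff: "act c (x - y) = act c x - act c y"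
  and mT_diff_left: "mT (x - x') y = mT x y - mT x' y"
  and mT_diff_right: "mT x (y - y') = mT x y - mT x y'"
  using act_linear mT_linear_left mT_linear_right by (metis module_hom.diff module_hom_iff_linear)+

lemma act_zpow_tp:
  assumes "u * v = 1"
  shows "act (zpow u v l) (tp a (zpow u v k * b)) = tp a (zpow u v (k + l) * b)"
  using zpow_add[OF assms, of k l] by (simp add: act_tp mult_ac)

lemma derivation_act_defect_balanced:
  assumes der: "derivation_on sT mT B d"
    and B: "x \<in> B" "y \<in> B" "act w x \<in> B" "act w y \<in> B"
  shows "mT (d (act w x) - act w (d x)) y = mT x (d (act w y) - act w (d y))"
proof -
  have leibniz: "d (mT p q) = mT (d p) q + mT p (d q)" if "p \<in> B" "q \<in> B" for p q
    using der that by (simp add: derivation_on_def)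
  have "mT (act w x) y = mT x (act w y)"
    by (simp add: mT_act_left mT_act_right)
  then have "mT (d (act w x)) y + mT (act w x) (d y) = mT (d x) (act w y) + mT x (d (act w y))"
    using leibniz[OF B(3,2)] leibniz[OF B(1,4)] by metis
  then have "mT (d (act w x)) y + act w (mT x (d y)) = act w (mT (d x) y) + mT x (d (act w y))"
    by (simp only: mT_act_left mT_act_right)
  then show ?thesis
    by (simp add: mT_diff_left mT_diff_right mT_act_left mT_act_right algebra_simps)
qed

lemma derivation_zpow_identity:
  assumes uv: "u * v = 1" and der: "derivation_on sT mT B d"
    and B: "tp a (zpow u v (- s) * b) \<in> B" "tp a (zpow u v (- s + n) * b) \<in> B"
      "tp a' (zpow u v (- t) * b') \<in> B" "tp a' (zpow u v (- t + n) * b') \<in> B"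
  shows "mT (act (zpow u v (- n + s)) (d (tp a (zpow u v (- s + n) * b)))
             - act (zpow u v s) (d (tp a (zpow u v (- s) * b))))
           (tp a' b')
       = mT (tp a b)
           (act (zpow u v (- n + t)) (d (tp a' (zpow u v (- t + n) * b')))
             - act (zpow u v t) (d (tp a' (zpow u v (- t) * b'))))"
proof -
  let ?z = "zpow u v"
  define x where "x = tp a (?z (- s) * b)"
  define y where "y = tp a' (?z (- t) * b')"
  have shift: "tp c (?z (- r + n) * e) = act (?z n) (tp c (?z (- r) * e))"
    and unshift: "tp c e = act (?z r) (tp c (?z (- r) * e))" for c r e
    using act_zpow_tp[OF uv, of _ c "- r" e] by simp_all
  have defect: "act (?z (- n + r)) (d (act (?z n) p)) - act (?z r) (d p)
      = act (?z (- n + r)) (d (act (?z n) p) - act (?z n) (d p))" for r p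
    using zpow_add[OF uv, of "- n + r" n] by (simp add: act_diff act_act)
  have "mT (act (?z (- n + s)) (d (act (?z n) x)) - act (?z s) (d x)) (act (?z t) y)
      = act (?z (- n + s) * ?z t) (mT (d (act (?z n) x) - act (?z n) (d x)) y)"
    by (simp only: defect mT_act_act)
  also have "\<dots> = act (?z s * ?z (- n + t)) (mT x (d (act (?z n) y) - act (?z n) (d y)))"
  proof -
    have "mT (d (act (?z n) x) - act (?z n) (d x)) y = mT x (d (act (?z n) y) - act (?z n) (d y))"
      by (rule derivation_act_defect_balanced[OF der]) (use B in \<open>simp_all add: x_def y_def flip: shift\<close>)
    moreover have "?z (- n + s) * ?z t = ?z s * ?z (- n + t)"
      by (simp add: zpow_add[OF uv] algebra_simps)
    ultimately show ?thesis by simp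
  qed
  also have "\<dots> = mT (act (?z s) x) (act (?z (- n + t)) (d (act (?z n) y)) - act (?z t) (d y))"
    by (simp only: defect mT_act_act)
  finally show ?thesis
    by (simp only: x_def y_def flip: shift unshift)
qed

lemma tp_mem_fixed_sub:
  assumes "a \<in> gA (- k)" and "e \<in> gS k"
  shows "tp a e \<in> fixed_sub sT tp gA gS"
  unfolding fixed_sub_def
  by (rule module.span_base) (use assms vector_space in \<open>auto simp: module_iff_vector_space\<close>)

lemma derivation_graded_identity:
  assumes S_alg: "comm_k_algebra sS" and \<sigma>2_aut: "alg_aut sS (*) \<sigma>2"
    and \<omega>: "\<omega> ^ m = 1" "0 < m" and u: "u \<in> grade sS \<sigma>2 \<omega> 1" and uv: "u * v = 1"
    and der: "derivation_on sT mT (fixed_sub sT tp (grade sA \<sigma>1 \<omega>) (grade sS \<sigma>2 \<omega>)) d"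
    and a: "a \<in> grade sA \<sigma>1 \<omega> i" and a': "a' \<in> grade sA \<sigma>1 \<omega> j"
    and b: "b \<in> grade sS \<sigma>2 \<omega> (- i + s)" and b': "b' \<in> grade sS \<sigma>2 \<omega> (- j + t)"
  shows "mT (act (zpow u v (- int m + s)) (d (tp a (zpow u v (- s + int m) * b)))
             - act (zpow u v s) (d (tp a (zpow u v (- s) * b))))
           (tp a' b')
       = mT (tp a b)
           (act (zpow u v (- int m + t)) (d (tp a' (zpow u v (- t + int m) * b')))
             - act (zpow u v t) (d (tp a' (zpow u v (- t) * b'))))"
proof -
  have "\<omega> \<noteq> 0"
    using \<omega> by (metis power_0_left less_not_refl zero_neq_one)
  have mem: "tp c (zpow u v (- r) * e) \<in> fixed_sub sT tp (grade sA \<sigma>1 \<omega>) (grade sS \<sigma>2 \<omega>)"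
    "tp c (zpow u v (- r + int m) * e) \<in> fixed_sub sT tp (grade sA \<sigma>1 \<omega>) (grade sS \<sigma>2 \<omega>)"
    if c: "c \<in> grade sA \<sigma>1 \<omega> k" and e: "e \<in> grade sS \<sigma>2 \<omega> (- k + r)" for c e k r
  proof -
    have "zpow u v n * e \<in> grade sS \<sigma>2 \<omega> (n - k + r)" for n
      using grade_mult[OF S_alg \<sigma>2_aut \<open>\<omega> \<noteq> 0\<close> grade_zpow[OF S_alg \<sigma>2_aut \<open>\<omega> \<noteq> 0\<close> u uv] e]
      by (simp add: algebra_simps)
    from this[of "- r"] this[of "- r + int m"]
    have "zpow u v (- r) * e \<in> grade sS \<sigma>2 \<omega> (- k)"
      and "zpow u v (- r + int m) * e \<in> grade sS \<sigma>2 \<omega> (- k)"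
      using grade_add_period[OF \<omega>(1), of sS \<sigma>2 "- k"] by (simp_all add: algebra_simps)
    then show "tp c (zpow u v (- r) * e) \<in> fixed_sub sT tp (grade sA \<sigma>1 \<omega>) (grade sS \<sigma>2 \<omega>)"
      and "tp c (zpow u v (- r + int m) * e) \<in> fixed_sub sT tp (grade sA \<sigma>1 \<omega>) (grade sS \<sigma>2 \<omega>)"
      using c by (simp_all add: tp_mem_fixed_sub[where k = "- k"])
  qed
  show ?thesis
    by (rule derivation_zpow_identity[OF uv der mem[OF a b] mem[OF a' b']])
qed

end

theorem lemma4p7:
  fixes sA :: "'k::field \<Rightarrow> 'a::ab_group_add \<Rightarrow> 'a" and mA :: "'a \<Rightarrow> 'a \<Rightarrow> 'a"
    and sS :: "'k \<Rightarrow> 's::comm_ring_1 \<Rightarrow> 's"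
    and sT :: "'k \<Rightarrow> 't::ab_group_add \<Rightarrow> 't" and tp :: "'a \<Rightarrow> 's \<Rightarrow> 't"
    and mT :: "'t \<Rightarrow> 't \<Rightarrow> 't" and act :: "'s \<Rightarrow> 't \<Rightarrow> 't"
    and \<sigma>1 :: "'a \<Rightarrow> 'a" and \<sigma>2 :: "'s \<Rightarrow> 's"
    and m :: nat and \<omega> :: 'k and u v :: 's and d :: "'t \<Rightarrow> 't"
    and i j s t :: int and ai aj :: 'a and bi bj :: 's
  assumes m_pos: "0 < m"
    and char: "of_nat m \<noteq> (0::'k)"
    and prim: "\<omega> ^ m = 1" "\<forall>r. 0 < r \<and> r < m \<longrightarrow> \<omega> ^ r \<noteq> 1"
    and A_alg: "k_algebra sA mA" and A_perf: "perfect sA mA"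
    and S_alg: "comm_k_algebra sS"
    and tensor: "is_tensor_product sA sS sT tp"
    and mT_bilin: "bilin sT sT sT mT"
    and mT_tp: "\<forall>a s a' s'. mT (tp a s) (tp a' s') = tp (mA a a') (s * s')"
    and act_lin: "\<forall>s'. Vector_Spaces.linear sT sT (act s')"
    and act_tp: "\<forall>s' a s. act s' (tp a s) = tp a (s * s')"
    and \<sigma>1_aut: "alg_aut sA mA \<sigma>1" and \<sigma>1_m: "\<sigma>1 ^^ m = id"
    and \<sigma>2_aut: "alg_aut sS (*) \<sigma>2" and \<sigma>2_m: "\<sigma>2 ^^ m = id"
    and u_grade: "u \<in> grade sS \<sigma>2 \<omega> 1" and u_inv: "u * v = 1"
    and der: "derivation_on sT mT (fixed_sub sT tp (grade sA \<sigma>1 \<omega>) (grade sS \<sigma>2 \<omega>)) d"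
    and ai: "ai \<in> grade sA \<sigma>1 \<omega> i" and aj: "aj \<in> grade sA \<sigma>1 \<omega> j"
    and bi: "bi \<in> grade sS \<sigma>2 \<omega> (- i + s)" and bj: "bj \<in> grade sS \<sigma>2 \<omega> (- j + t)"
  shows
    "mT (act (zpow u v (- int m + s)) (d (tp ai (zpow u v (- s + int m) * bi)))
           - act (zpow u v s) (d (tp ai (zpow u v (- s) * bi))))
        (tp aj bj)
     = mT (tp ai bi)
        (act (zpow u v (- int m + t)) (d (tp aj (zpow u v (- t + int m) * bj)))
           - act (zpow u v t) (d (tp aj (zpow u v (- t) * bj))))
   \<and>
    mT (tp ai (zpow u v (- i)))
       (act (zpow u v (- j))
          (act (zpow u v (- int m + j)) (d (tp aj (zpow u v (- j + int m))))
           - act (zpow u v j) (d (tp aj (zpow u v (- j))))))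
     = mT (act (zpow u v (- i))
          (act (zpow u v (- int m + i)) (d (tp ai (zpow u v (- i + int m))))
           - act (zpow u v i) (d (tp ai (zpow u v (- i))))))
       (tp aj (zpow u v (- j)))
   \<and>
    mT (tp ai 1)
       (act (zpow u v (- int m + t)) (d (tp aj (zpow u v (- t + int m) * bj)))
         - act (zpow u v t) (d (tp aj (zpow u v (- t) * bj))))
     = mT (act (zpow u v (- int m + i)) (d (tp ai (zpow u v (- i + int m))))
         - act (zpow u v i) (d (tp ai (zpow u v (- i)))))
       (tp aj bj)"
proof -
  interpret tensor_S_bimodule sT tp mA mT act
    using tensor mT_bilin mT_tp act_lin act_tp
    by (simp add: tensor_S_bimodule_def is_tensor_product_def)
  note identity = derivation_graded_identity[OF S_alg \<sigma>2_aut prim(1) m_pos u_grade u_inv der]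
  have one: "1 \<in> grade sS \<sigma>2 \<omega> (- k + k)" for k
    using grade_one[OF S_alg \<sigma>2_aut] by simp
  have tp_zpow: "tp a (zpow u v n) = act (zpow u v n) (tp a 1)" for a n
    by (simp add: act_tp)
  let ?E = "\<lambda>a k. act (zpow u v (- int m + k)) (d (tp a (zpow u v (- k + int m))))
                   - act (zpow u v k) (d (tp a (zpow u v (- k))))"
  have "mT (?E ai i) (tp aj 1) = mT (tp ai 1) (?E aj j)"
    using identity[OF ai aj one one] by simp
  then have "mT (tp ai (zpow u v (- i))) (act (zpow u v (- j)) (?E aj j))
           = mT (act (zpow u v (- i)) (?E ai i)) (tp aj (zpow u v (- j)))"
    by (simp only: tp_zpow mT_act_act mult.commute)
  then show ?thesis
    using identity[OF ai aj bi bj] identity[OF ai aj one bj] by simp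
qed

end
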